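(* Let $K>1$ and let $n_1,\dots,n_K$ be positive integers. Then \[ \mathbb{E}[\tau(n_1,\dots,n_K)] \;\le\; K\cdot \min_c n_c . \]
   Context: Initial stocks $\vec n^{(0)}=(n_1,\dots,n_K)$ of $K$ goodie types evolve as follows: at each step $t=1,2,\dots$, as long as at least two coordinates of $\vec n^{(t-1)}$ are nonzero, an index $i$ is chosen uniformly at random (independently of the past) among the indices with $n_i^{(t-1)}>0$, and $\vec n^{(t)}=\vec n^{(t-1)}-\vec e_i$ ($\vec e_i$ the $i$-th standard unit vector). The time of the first emptying event is $\tau(n_1,\dots,n_K)=\min\{t : \exists i \text{ with } n_i^{(t)}=0 \text{ and } n_i^{(0)}>0\}$. *)

theory Defs
  imports "HOL-Probability.Probability"
begin

text \<open>Stocks are a list n of length K (n!i = stock of type i).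
  tau_rem f n0 n is the distribution of the remaining time until the first
  emptying event (some i with n0!i > 0 and current stock 0), when the current
  stock vector is n and the initial vector is n0; f is fuel (the process makes at
  most sum_list n0 steps, so fuel sum_list n0 suffices).\<close>

fun tau_rem :: "nat \<Rightarrow> nat list \<Rightarrow> nat list \<Rightarrow> nat pmf" where
  "tau_rem 0 n0 n = return_pmf 0"
| "tau_rem (Suc f) n0 n =
     (if (\<exists>i<length n. 0 < n0 ! i \<and> n ! i = 0)
         \<or> card {i. i < length n \<and> 0 < n ! i} < 2
      then return_pmf 0
      else bind_pmf (pmf_of_set {i. i < length n \<and> 0 < n ! i})
             (\<lambda>i. map_pmf Suc (tau_rem f n0 (n[i := n ! i - 1]))))"

definition tau_pmf :: "nat list \<Rightarrow> nat pmf" where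
  "tau_pmf ns = tau_rem (sum_list ns) ns ns"

end

theory Submission
  imports Defs
begin

text \<open>Fix a type c. As long as the process runs, every stock is positive, so each step picks
  each of the K types with probability 1/K; one step costs time 1 and lowers the potential
  K n_c by 1 in expectation. Hence the expected remaining time is bounded by the potential
  K n_c, and choosing c with n_c minimal gives the claim.\<close>

lemma set_pmf_tau_rem_le: "set_pmf (tau_rem f n0 n) \<subseteq> {..f}"
proof (induction f arbitrary: n)
  case 0
  then show ?case by simp
next
  case (Suc f)
  then show ?case
    by (auto simp del: set_pmf_of_set)
qed

lemma finite_set_pmf_tau_rem: "finite (set_pmf (tau_rem f n0 n))"
  using set_pmf_tau_rem_le by (rule finite_subset) simp

lemma expectation_map_pmf_Suc:
  fixes p :: "nat pmf"
  assumes "finite (set_pmf p)"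
  shows "measure_pmf.expectation (map_pmf Suc p) real = 1 + measure_pmf.expectation p real"
proof -
  have "integrable (measure_pmf p) real"
    using assms by (rule integrable_measure_pmf_finite)
  then show ?thesis
    by (simp add: Bochner_Integration.integral_add)
qed

lemma sum_nth_list_update_decrement:
  assumes "c < length n" "0 < n ! c"
  shows "(\<Sum>i<length n. real (n[i := n ! i - 1] ! c)) = real (length n) * real (n ! c) - 1"
proof -
  have "(\<Sum>i<length n. real (n[i := n ! i - 1] ! c))
      = (\<Sum>i<length n. real (n ! c) - (if i = c then 1 else 0))"
    using assms by (intro sum.cong) (auto simp: of_nat_diff)
  also have "\<dots> = real (length n) * real (n ! c) - 1"
    using assms(1) by (simp add: sum_subtractf)
  finally show ?thesis .
qed

lemma expectation_tau_rem_Suc_interior: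
  assumes pos: "\<forall>i<length n. 0 < n ! i" and two: "2 \<le> length n"
  shows "measure_pmf.expectation (tau_rem (Suc f) n0 n) real
       = 1 + (\<Sum>i<length n. measure_pmf.expectation (tau_rem f n0 (n[i := n ! i - 1])) real)
               / real (length n)"
proof -
  have "{i. i < length n \<and> 0 < n ! i} = {..<length n}"
    using pos by auto
  then have step: "tau_rem (Suc f) n0 n
      = pmf_of_set {..<length n} \<bind> (\<lambda>i. map_pmf Suc (tau_rem f n0 (n[i := n ! i - 1])))"
    using pos two by auto
  have "measure_pmf.expectation (tau_rem (Suc f) n0 n) real
      = (\<Sum>i<length n. (1 + measure_pmf.expectation (tau_rem f n0 (n[i := n ! i - 1])) real)
                         / real (length n))"
    unfolding step using two
    by (subst pmf_expectation_bind_pmf_of_set)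
       (auto simp: finite_set_pmf_tau_rem lessThan_empty_iff
         expectation_map_pmf_Suc[OF finite_set_pmf_tau_rem] divide_inverse_commute
         simp del: integral_map_pmf)
  also have "\<dots> = 1 + (\<Sum>i<length n. measure_pmf.expectation (tau_rem f n0 (n[i := n ! i - 1])) real)
                       / real (length n)"
    using two by (auto simp: add_divide_distrib sum.distrib simp flip: sum_divide_distrib)
  finally show ?thesis .
qed

lemma expectation_tau_rem_le:
  assumes pos: "\<forall>m\<in>set n0. 0 < m" and len: "length n = length n0" and c: "c < length n"
  shows "measure_pmf.expectation (tau_rem f n0 n) real \<le> real (length n) * real (n ! c)"
  using len c
proof (induction f arbitrary: n)
  case 0
  then show ?case by simp
next
  case (Suc f)
  let ?K = "length n"
  show ?case
  proof (cases "(\<exists>i<?K. 0 < n0 ! i \<and> n ! i = 0) \<or> card {i. i < ?K \<and> 0 < n ! i} < 2")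
    case True
    then show ?thesis by simp
  next
    case False
    have all_pos: "\<forall>i<?K. 0 < n ! i"
      using False pos Suc.prems(1) by (metis gr0I nth_mem)
    then have "{i. i < ?K \<and> 0 < n ! i} = {..<?K}" by auto
    then have two: "2 \<le> ?K" using False by simp
    have "measure_pmf.expectation (tau_rem (Suc f) n0 n) real
       = 1 + (\<Sum>i<?K. measure_pmf.expectation (tau_rem f n0 (n[i := n ! i - 1])) real) / real ?K"
      using all_pos two by (rule expectation_tau_rem_Suc_interior)
    also have "\<dots> \<le> 1 + (\<Sum>i<?K. real ?K * real (n[i := n ! i - 1] ! c)) / real ?K"
    proof (intro add_left_mono divide_right_mono sum_mono)
      fix i
      show "measure_pmf.expectation (tau_rem f n0 (n[i := n ! i - 1])) real
          \<le> real ?K * real (n[i := n ! i - 1] ! c)"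
        using Suc.IH[of "n[i := n ! i - 1]"] Suc.prems by simp
    qed simp
    also have "\<dots> = 1 + (\<Sum>i<?K. real (n[i := n ! i - 1] ! c))"
      using two by (simp flip: sum_distrib_left)
    also have "\<dots> = real ?K * real (n ! c)"
      using sum_nth_list_update_decrement[OF Suc.prems(2)] Suc.prems(2) all_pos by simp
    finally show ?thesis .
  qed
qed

theorem lemma2:
  fixes ns :: "nat list"
  assumes "length ns > 1"
    and "\<forall>c\<in>set ns. c > 0"
  shows "measure_pmf.expectation (tau_pmf ns) real
           \<le> real (length ns) * real (Min (set ns))"
proof -
  have "Min (set ns) \<in> set ns"
    using assms(1) by (intro Min_in) auto
  then obtain c where "c < length ns" "ns ! c = Min (set ns)"
    by (metis in_set_conv_nth)
  with expectation_tau_rem_le[OF assms(2) refl] show ?thesis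
    unfolding tau_pmf_def by metis
qed

end
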